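(* Let $G_n$ be probability distributions on $\mathbb{R}$ with densities $g_n$, let $\ell_n=\log\frac{g_n}{\varphi}$ with $\varphi$ the standard normal density, and suppose that for some measurable $\alpha:\mathbb{R}\to\mathbb{R}$, $$\lim_{n\to\infty}\frac{\ell_n(u\sqrt{2\log n})}{\log n}=\alpha(u)$$ uniformly in $u\in\mathbb{R}$. Then $$\lim_{t\to\infty}\frac1t\log\int_{\mathbb{R}}\exp\big(t(\alpha(u)-u^2)\big)\,du=0.$$ In particular, $\alpha(u)\le u^2$ for Lebesgue-almost every $u$. Conversely, for every measurable $\alpha$ satisfying the displayed limit relation for the integral, there exists a sequence of distributions $\{G_n\}$ with densities such that the uniform convergence above holds. Additionally, if $G_n=P_n*\mathcal{N}(0,1)$ for some probability distributions $P_n$ (convolutional model), then $\alpha$ is convex.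
   Context: $*$ denotes convolution of distributions. Uniform convergence means $\sup_{u\in\mathbb{R}}\big|\frac{\ell_n(u\sqrt{2\log n})}{\log n}-\alpha(u)\big|\to0$. *)

theory Defs
  imports "HOL-Probability.Probability"
begin

definition is_prob_density :: "(real \<Rightarrow> real) \<Rightarrow> bool" where
  "is_prob_density g \<longleftrightarrow> g \<in> borel_measurable borel \<and> (\<forall>x. 0 \<le> g x) \<and>
     (\<integral>\<^sup>+ x. ennreal (g x) \<partial>lborel) = 1"

definition llr :: "(real \<Rightarrow> real) \<Rightarrow> real \<Rightarrow> real" where
  "llr g x = ln (g x / std_normal_density x)"

text \<open>Uniform convergence sup_u | l_n(u sqrt(2 log n)) / log n - alpha u | \<longrightarrow> 0.
  Positivity of g_n at the evaluation points is required, since l_n must be finite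
  (log 0 = -infinity would make the supremum infinite).\<close>
definition unif_conv :: "(nat \<Rightarrow> real \<Rightarrow> real) \<Rightarrow> (real \<Rightarrow> real) \<Rightarrow> bool" where
  "unif_conv g \<alpha> \<longleftrightarrow> (\<forall>\<epsilon>>0. \<forall>\<^sub>F n in sequentially. \<forall>u::real.
      g n (u * sqrt (2 * ln (real n))) > 0 \<and>
      \<bar>llr (g n) (u * sqrt (2 * ln (real n))) / ln (real n) - \<alpha> u\<bar> < \<epsilon>)"

definition int_limit :: "(real \<Rightarrow> real) \<Rightarrow> bool" where
  "int_limit \<alpha> \<longleftrightarrow>
     (\<forall>\<^sub>F t in at_top. integrable lborel (\<lambda>u. exp (t * (\<alpha> u - u\<^sup>2)))) \<and>
     ((\<lambda>t. ln (\<integral>u. exp (t * (\<alpha> u - u\<^sup>2)) \<partial>lborel) / t) \<longlongrightarrow> 0) at_top"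

end

theory Submission
  imports Defs "HOL-Real_Asymp.Real_Asymp"
begin

text \<open>Write \<open>T = log n\<close> and \<open>S = sqrt (2 T)\<close>. Since \<open>\<phi>(u S) = exp (- T u\<^sup>2) / sqrt (2 \<pi>)\<close>,
  we have \<open>exp (T (\<alpha> u - u\<^sup>2)) = sqrt (2 \<pi>) g\<^sub>n (u S) exp (T \<alpha> u - \<ell>\<^sub>n (u S))\<close>, and uniform
  convergence makes the last factor \<open>exp (o(T))\<close> uniformly in \<open>u\<close>. As \<open>\<integral> g\<^sub>n (u S) du = 1 / S\<close>,
  the integral \<open>\<integral> exp (T (\<alpha> u - u\<^sup>2)) du\<close> is \<open>exp (o(T))\<close> along \<open>T = log n\<close>. Markov's inequality
  then forces \<open>\<alpha> u \<le> u\<^sup>2\<close> almost everywhere, so the integral is decreasing in \<open>t\<close> and the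
  limit passes from the points \<open>log n\<close> to all \<open>t \<rightarrow> \<infinity>\<close>. Conversely, the densities
  \<open>g\<^sub>n(x) \<propto> exp (T (\<alpha> (x/S) - (x/S)\<^sup>2))\<close> realise every \<open>\<alpha>\<close> satisfying the integral condition.
  In the convolutional model \<open>\<ell>\<^sub>n(x) = log \<integral> exp (x y - y\<^sup>2/2) dP\<^sub>n(y)\<close> is convex by Hoelder's
  inequality, and convexity survives the rescaling \<open>u \<mapsto> \<ell>\<^sub>n (u S) / T\<close> and the pointwise limit.\<close>

lemma std_normal_density_sqrt_scale:
  assumes "0 \<le> T"
  shows "std_normal_density (u * sqrt (2 * T)) = exp (- (T * u\<^sup>2)) / sqrt (2 * pi)"
  using assms by (simp add: std_normal_density_def power_mult_distrib)

lemma std_normal_density_shift_ratio: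
  "std_normal_density (x - y) / std_normal_density x = exp (x * y - y\<^sup>2 / 2)"
proof -
  have "- (x - y)\<^sup>2 / 2 - - x\<^sup>2 / 2 = x * y - y\<^sup>2 / 2"
    by (simp add: power2_eq_square field_simps)
  then show ?thesis
    by (simp add: std_normal_density_def flip: exp_diff)
qed

lemma is_prob_density_std_normal: "is_prob_density std_normal_density"
proof -
  interpret prob_space "density lborel std_normal_density"
    using prob_space_normal_density by simp
  have "emeasure (density lborel std_normal_density) UNIV = 1"
    using emeasure_space_1 by simp
  then show ?thesis
    by (simp add: is_prob_density_def emeasure_density)
qed

lemma is_prob_density_integral:
  assumes "is_prob_density g"
  shows "integrable lborel g" "(\<integral>x. g x \<partial>lborel) = 1"
proof -
  have [measurable]: "g \<in> borel_measurable borel" and nonneg: "\<And>x. 0 \<le> g x"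
    and one: "(\<integral>\<^sup>+ x. ennreal (g x) \<partial>lborel) = 1"
    using assms unfolding is_prob_density_def by auto
  show int: "integrable lborel g"
    by (rule integrableI_nonneg) (use nonneg one in auto)
  have "ennreal (\<integral>x. g x \<partial>lborel) = 1"
    using nn_integral_eq_integral[OF int] nonneg one by simp
  moreover have "0 \<le> (\<integral>x. g x \<partial>lborel)"
    using nonneg by (simp add: integral_nonneg_AE)
  ultimately show "(\<integral>x. g x \<partial>lborel) = 1"
    by simp
qed

lemma is_prob_density_rescaled:
  assumes "is_prob_density g" "0 < S"
  shows "integrable lborel (\<lambda>u. g (u * S))" "(\<integral>u. g (u * S) \<partial>lborel) = 1 / S"
proof -
  have "integrable lborel (\<lambda>u. g (0 + S * u))"
    using lborel_integrable_real_affine_iff[of S g 0] is_prob_density_integral(1)[OF assms(1)] assms(2)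
    by simp
  then show "integrable lborel (\<lambda>u. g (u * S))"
    by (simp add: mult.commute)
  have "1 = S * (\<integral>u. g (0 + S * u) \<partial>lborel)"
    using lborel_integral_real_affine[of S g 0] is_prob_density_integral(2)[OF assms(1)] assms(2)
    by simp
  then show "(\<integral>u. g (u * S) \<partial>lborel) = 1 / S"
    using assms(2) by (simp add: field_simps)
qed

lemma integral_exp_pos:
  fixes f :: "'a \<Rightarrow> real"
  assumes "integrable M (\<lambda>x. exp (f x))" "emeasure M (space M) \<noteq> 0"
  shows "0 < (\<integral>x. exp (f x) \<partial>M)"
proof -
  have "(\<integral>x. exp (f x) \<partial>M) \<noteq> 0"
  proof
    assume "(\<integral>x. exp (f x) \<partial>M) = 0"
    then have "AE x in M. False"
      using integral_nonneg_eq_0_iff_AE[OF assms(1)] by simp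
    with assms(2) show False
      by (metis ae_filter_eq_bot_iff trivial_limit_def)
  qed
  moreover have "0 \<le> (\<integral>x. exp (f x) \<partial>M)"
    by (rule integral_nonneg_AE) simp
  ultimately show ?thesis by linarith
qed

section \<open>Necessity of the integral condition\<close>

definition laplace_integral :: "(real \<Rightarrow> real) \<Rightarrow> real \<Rightarrow> real" where
  "laplace_integral \<alpha> t = (\<integral>u. exp (t * (\<alpha> u - u\<^sup>2)) \<partial>lborel)"

lemma laplace_integrand_bounds:
  assumes T: "0 < T" and pos: "0 < g (u * sqrt (2 * T))"
    and close: "\<bar>llr g (u * sqrt (2 * T)) / T - \<alpha> u\<bar> \<le> \<epsilon>"
  shows "sqrt (2 * pi) * exp (- (\<epsilon> * T)) * g (u * sqrt (2 * T)) \<le> exp (T * (\<alpha> u - u\<^sup>2))"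
    and "exp (T * (\<alpha> u - u\<^sup>2)) \<le> sqrt (2 * pi) * exp (\<epsilon> * T) * g (u * sqrt (2 * T))"
proof -
  define S c where "S = sqrt (2 * T)" and "c = sqrt (2 * pi)"
  define D where "D = T * \<alpha> u - llr g (u * S)"
  have c: "0 < c"
    by (simp add: c_def)
  have phi: "std_normal_density (u * S) = exp (- (T * u\<^sup>2)) / c"
    using T by (simp add: S_def c_def std_normal_density_sqrt_scale)
  have "exp (llr g (u * S)) = g (u * S) / std_normal_density (u * S)"
    using pos by (simp add: llr_def S_def normal_density_pos)
  also have "\<dots> = g (u * S) * c * exp (T * u\<^sup>2)"
    unfolding phi using c by (simp add: exp_minus field_simps)
  finally have "exp (llr g (u * S)) = g (u * S) * c * exp (T * u\<^sup>2)" .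
  then have identity: "exp (T * (\<alpha> u - u\<^sup>2)) = c * g (u * S) * exp D"
    using c pos by (simp add: D_def S_def exp_diff right_diff_distrib exp_minus field_simps)
  have "D = - (T * (llr g (u * S) / T - \<alpha> u))"
    using T by (simp add: D_def field_simps)
  then have "\<bar>D\<bar> \<le> \<epsilon> * T"
    using mult_left_mono[OF close, of T] T by (simp add: S_def abs_mult)
  then have "exp (- (\<epsilon> * T)) \<le> exp D" "exp D \<le> exp (\<epsilon> * T)"
    by simp_all
  then have "c * g (u * S) * exp (- (\<epsilon> * T)) \<le> c * g (u * S) * exp D"
    "c * g (u * S) * exp D \<le> c * g (u * S) * exp (\<epsilon> * T)"
    using c pos by (simp_all add: S_def mult_left_mono)
  then show "c * exp (- (\<epsilon> * T)) * g (u * S) \<le> exp (T * (\<alpha> u - u\<^sup>2))"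
    "exp (T * (\<alpha> u - u\<^sup>2)) \<le> c * exp (\<epsilon> * T) * g (u * S)"
    unfolding identity by (metis mult.commute mult.left_commute)+
qed

lemma laplace_integral_bounds:
  assumes g: "is_prob_density g" and T: "0 < T" and [measurable]: "\<alpha> \<in> borel_measurable borel"
    and pos: "\<And>u. 0 < g (u * sqrt (2 * T))"
    and close: "\<And>u. \<bar>llr g (u * sqrt (2 * T)) / T - \<alpha> u\<bar> \<le> \<epsilon>"
  shows "integrable lborel (\<lambda>u. exp (T * (\<alpha> u - u\<^sup>2)))"
    and "sqrt (2 * pi) * exp (- (\<epsilon> * T)) / sqrt (2 * T) \<le> laplace_integral \<alpha> T"
    and "laplace_integral \<alpha> T \<le> sqrt (2 * pi) * exp (\<epsilon> * T) / sqrt (2 * T)"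
proof -
  define S c where "S = sqrt (2 * T)" and "c = sqrt (2 * pi)"
  define G where "G = (\<lambda>u. g (u * S))"
  have S: "0 < S"
    using T by (simp add: S_def)
  have G_int: "integrable lborel G" and G_integral: "(\<integral>u. G u \<partial>lborel) = 1 / S"
    using is_prob_density_rescaled[OF g S] by (simp_all add: G_def)
  have [measurable]: "g \<in> borel_measurable borel"
    using g by (simp add: is_prob_density_def)
  have lower: "c * exp (- (\<epsilon> * T)) * G u \<le> exp (T * (\<alpha> u - u\<^sup>2))"
    and upper: "exp (T * (\<alpha> u - u\<^sup>2)) \<le> c * exp (\<epsilon> * T) * G u" for u
    using laplace_integrand_bounds[where g = g and \<alpha> = \<alpha> and u = u, OF T pos close]
    by (simp_all add: S_def c_def G_def)
  show int: "integrable lborel (\<lambda>u. exp (T * (\<alpha> u - u\<^sup>2)))"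
    by (rule Bochner_Integration.integrable_bound[where f = "\<lambda>u. c * exp (\<epsilon> * T) * G u"])
       (use G_int upper in \<open>auto intro: order_trans[OF _ abs_ge_self]\<close>)
  have "c * exp (- (\<epsilon> * T)) / S = (\<integral>u. c * exp (- (\<epsilon> * T)) * G u \<partial>lborel)"
    using G_integral by simp
  also have "\<dots> \<le> laplace_integral \<alpha> T"
    unfolding laplace_integral_def by (rule integral_mono) (use G_int int lower in auto)
  finally show "sqrt (2 * pi) * exp (- (\<epsilon> * T)) / sqrt (2 * T) \<le> laplace_integral \<alpha> T"
    by (simp add: c_def S_def)
  have "laplace_integral \<alpha> T \<le> (\<integral>u. c * exp (\<epsilon> * T) * G u \<partial>lborel)"
    unfolding laplace_integral_def by (rule integral_mono) (use G_int int upper in auto)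
  also have "\<dots> = c * exp (\<epsilon> * T) / S"
    using G_integral by simp
  finally show "laplace_integral \<alpha> T \<le> sqrt (2 * pi) * exp (\<epsilon> * T) / sqrt (2 * T)"
    by (simp add: c_def S_def)
qed

lemma unif_conv_laplace_integral_bounds:
  assumes [measurable]: "\<alpha> \<in> borel_measurable borel"
    and dens: "\<And>n. is_prob_density (g n)" and uc: "unif_conv g \<alpha>" and "0 < \<epsilon>"
  shows "\<forall>\<^sub>F n in sequentially. integrable lborel (\<lambda>u. exp (ln (real n) * (\<alpha> u - u\<^sup>2)))
    \<and> sqrt (2 * pi) * exp (- (\<epsilon> * ln (real n))) / sqrt (2 * ln (real n)) \<le> laplace_integral \<alpha> (ln (real n))
    \<and> laplace_integral \<alpha> (ln (real n)) \<le> sqrt (2 * pi) * exp (\<epsilon> * ln (real n)) / sqrt (2 * ln (real n))"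
  using eventually_ge_at_top[of "2::nat"] uc[unfolded unif_conv_def, rule_format, OF \<open>0 < \<epsilon>\<close>]
proof eventually_elim
  case (elim n)
  then have "0 < ln (real n)"
    by simp
  with elim(2) show ?case
    using laplace_integral_bounds[OF dens[of n], of "ln (real n)" \<alpha> \<epsilon>] by (auto intro: less_imp_le)
qed

lemma AE_nonpos_if_superlevel_null:
  fixes f :: "'a \<Rightarrow> real"
  assumes [measurable]: "f \<in> borel_measurable M"
    and null: "\<And>\<delta>. 0 < \<delta> \<Longrightarrow> emeasure M {x \<in> space M. \<delta> \<le> f x} = 0"
  shows "AE x in M. f x \<le> 0"
proof -
  have "AE x in M. f x < inverse (Suc k)" for k :: nat
  proof (rule AE_I')
    have "{x \<in> space M. inverse (Suc k) \<le> f x} \<in> sets M"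
      by measurable
    then show "{x \<in> space M. inverse (Suc k) \<le> f x} \<in> null_sets M"
      using null[of "inverse (Suc k)"] by (simp add: null_sets_def)
  qed (auto simp: not_less)
  then have "AE x in M. \<forall>k::nat. f x < inverse (Suc k)"
    by (simp add: AE_all_countable)
  then show ?thesis
  proof (rule eventually_mono)
    fix x assume small: "\<forall>k::nat. f x < inverse (Suc k)"
    show "f x \<le> 0"
    proof (rule ccontr)
      assume "\<not> f x \<le> 0"
      then obtain k where "inverse (real (Suc k)) < f x"
        using reals_Archimedean[of "f x"] by auto
      with small show False
        using less_asym by blast
    qed
  qed
qed

lemma laplace_integral_superlevel_bound:
  assumes [measurable]: "\<alpha> \<in> borel_measurable borel" and "0 < T"
    and int: "integrable lborel (\<lambda>u. exp (T * (\<alpha> u - u\<^sup>2)))"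
  shows "emeasure lborel {u. \<delta> \<le> \<alpha> u - u\<^sup>2} \<le> ennreal (laplace_integral \<alpha> T / exp (\<delta> * T))"
proof -
  have "{u. \<delta> \<le> \<alpha> u - u\<^sup>2} = {u \<in> space lborel. exp (\<delta> * T) \<le> exp (T * (\<alpha> u - u\<^sup>2))}"
    using \<open>0 < T\<close> by (auto simp: mult.commute)
  then show ?thesis
    using integral_Markov_inequality[OF int, of "exp (\<delta> * T)"]
    by (simp add: laplace_integral_def)
qed

lemma unif_conv_AE_le_square:
  assumes [measurable]: "\<alpha> \<in> borel_measurable borel"
    and dens: "\<And>n. is_prob_density (g n)" and uc: "unif_conv g \<alpha>"
  shows "AE u in lborel. \<alpha> u \<le> u\<^sup>2"
proof -
  have "emeasure lborel {u \<in> space lborel. \<delta> \<le> \<alpha> u - u\<^sup>2} = 0" if "0 < \<delta>" for \<delta>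
  proof -
    define b where
      "b n = sqrt (2 * pi) * exp (\<delta> / 2 * ln (real n)) / sqrt (2 * ln (real n)) / exp (\<delta> * ln (real n))"
      for n :: nat
    have "b \<longlonglongrightarrow> 0"
      unfolding b_def using \<open>0 < \<delta>\<close> by real_asymp
    then have "(\<lambda>n. ennreal (b n)) \<longlonglongrightarrow> 0"
      using tendsto_ennrealI by fastforce
    moreover have "\<forall>\<^sub>F n in sequentially. emeasure lborel {u. \<delta> \<le> \<alpha> u - u\<^sup>2} \<le> ennreal (b n)"
      using eventually_ge_at_top[of "2::nat"] unif_conv_laplace_integral_bounds[OF assms half_gt_zero[OF that]]
    proof eventually_elim
      case (elim n)
      then have "0 < ln (real n)"
        by simp
      then have "emeasure lborel {u. \<delta> \<le> \<alpha> u - u\<^sup>2}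
          \<le> ennreal (laplace_integral \<alpha> (ln (real n)) / exp (\<delta> * ln (real n)))"
        using elim(2) by (intro laplace_integral_superlevel_bound) auto
      also have "\<dots> \<le> ennreal (b n)"
        unfolding b_def using elim(2) by (intro ennreal_leI divide_right_mono) auto
      finally show ?case .
    qed
    ultimately have "emeasure lborel {u. \<delta> \<le> \<alpha> u - u\<^sup>2} \<le> 0"
      by (rule tendsto_le[OF sequentially_bot _ tendsto_const])
    then show ?thesis
      by simp
  qed
  then have "AE u in lborel. \<alpha> u - u\<^sup>2 \<le> 0"
    by (intro AE_nonpos_if_superlevel_null) auto
  then show ?thesis
    by simp
qed

lemma laplace_integral_antimono:
  assumes [measurable]: "\<alpha> \<in> borel_measurable borel"
    and le: "AE u in lborel. \<alpha> u \<le> u\<^sup>2" and t: "0 \<le> t1" "t1 \<le> t2"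
    and int: "integrable lborel (\<lambda>u. exp (t1 * (\<alpha> u - u\<^sup>2)))"
  shows "integrable lborel (\<lambda>u. exp (t2 * (\<alpha> u - u\<^sup>2)))"
    and "laplace_integral \<alpha> t2 \<le> laplace_integral \<alpha> t1"
proof -
  have pointwise: "AE u in lborel. exp (t2 * (\<alpha> u - u\<^sup>2)) \<le> exp (t1 * (\<alpha> u - u\<^sup>2))"
    using le by eventually_elim (use t in \<open>simp add: mult_right_mono_neg\<close>)
  show int2: "integrable lborel (\<lambda>u. exp (t2 * (\<alpha> u - u\<^sup>2)))"
    by (rule Bochner_Integration.integrable_bound[OF int]) (use pointwise in auto)
  show "laplace_integral \<alpha> t2 \<le> laplace_integral \<alpha> t1"
    unfolding laplace_integral_def by (rule integral_mono_AE[OF int2 int pointwise])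
qed

lemma ln_floor_exp_bounds:
  fixes t :: real
  assumes "0 \<le> t"
  defines "n \<equiv> nat \<lfloor>exp t\<rfloor>"
  shows "ln (real n) \<le> t" and "t \<le> ln (real n + 1)" and "ln (real n + 1) \<le> t + 1"
proof -
  have "1 \<le> exp t"
    using assms by simp
  then have "real n = of_int \<lfloor>exp t\<rfloor>"
    by (simp add: n_def)
  then have n: "1 \<le> real n" "real n \<le> exp t" "exp t < real n + 1"
    using \<open>1 \<le> exp t\<close> by simp_all
  show "ln (real n) \<le> t"
    using ln_mono[OF n(2)] n(1) by simp
  show "t \<le> ln (real n + 1)"
    using ln_mono[OF less_imp_le[OF n(3)]] by simp
  have "real n + 1 \<le> 2 * exp t"
    using n by linarith
  also have "\<dots> \<le> exp 1 * exp t"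
    using exp_ge_add_one_self[of 1] by simp
  finally have "real n + 1 \<le> exp (t + 1)"
    by (simp add: exp_add mult.commute)
  from ln_mono[OF this] show "ln (real n + 1) \<le> t + 1"
    by simp
qed

lemma laplace_integral_bounds_interpolate:
  fixes t :: real
  assumes [measurable]: "\<alpha> \<in> borel_measurable borel" and le: "AE u in lborel. \<alpha> u \<le> u\<^sup>2"
    and "0 \<le> t" "0 \<le> \<epsilon>"
  defines "n \<equiv> nat \<lfloor>exp t\<rfloor>"
  assumes "3 \<le> n"
    and int: "integrable lborel (\<lambda>u. exp (ln (real n) * (\<alpha> u - u\<^sup>2)))"
    and upper: "laplace_integral \<alpha> (ln (real n)) \<le> sqrt (2 * pi) * exp (\<epsilon> * ln (real n)) / sqrt (2 * ln (real n))"
    and lower: "sqrt (2 * pi) * exp (- (\<epsilon> * ln (real (Suc n)))) / sqrt (2 * ln (real (Suc n)))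
      \<le> laplace_integral \<alpha> (ln (real (Suc n)))"
  shows "integrable lborel (\<lambda>u. exp (t * (\<alpha> u - u\<^sup>2)))
    \<and> sqrt (2 * pi) * exp (- (\<epsilon> * (t + 1))) / sqrt (2 * (t + 1)) \<le> laplace_integral \<alpha> t
    \<and> laplace_integral \<alpha> t \<le> sqrt (2 * pi) * exp (\<epsilon> * t)"
proof -
  define c T1 T2 where "c = sqrt (2 * pi)" and "T1 = ln (real n)" and "T2 = ln (real (Suc n))"
  have c: "0 < c"
    by (simp add: c_def)
  have T: "T1 \<le> t" "t \<le> T2" "T2 \<le> t + 1"
    using ln_floor_exp_bounds[OF \<open>0 \<le> t\<close>] by (simp_all add: T1_def T2_def n_def add.commute)
  have "ln 3 \<le> T1"
    unfolding T1_def using \<open>3 \<le> n\<close> by (intro ln_mono) simp_all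
  then have "1 < T1"
    using ln3_gt_1 by linarith
  then have T1_pos: "0 \<le> T1" and sqrt_T1: "1 \<le> sqrt (2 * T1)" and T2_pos: "0 < T2"
    using T by simp_all
  note mono_T1 = laplace_integral_antimono[OF assms(1) le T1_pos T(1)]
  have int_t: "integrable lborel (\<lambda>u. exp (t * (\<alpha> u - u\<^sup>2)))"
    using mono_T1(1) int by (simp add: T1_def)
  have "laplace_integral \<alpha> t \<le> laplace_integral \<alpha> T1"
    using mono_T1(2) int by (simp add: T1_def)
  also have "\<dots> \<le> c * exp (\<epsilon> * T1)"
    using upper sqrt_T1 c by (simp add: T1_def c_def divide_le_eq order_trans)
  also have "\<dots> \<le> c * exp (\<epsilon> * t)"
    using T c \<open>0 \<le> \<epsilon>\<close> by (simp add: mult_left_mono)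
  finally have up: "laplace_integral \<alpha> t \<le> c * exp (\<epsilon> * t)" .
  have "c * exp (- (\<epsilon> * (t + 1))) / sqrt (2 * (t + 1)) \<le> c * exp (- (\<epsilon> * T2)) / sqrt (2 * T2)"
    using T T2_pos c \<open>0 \<le> \<epsilon>\<close> by (intro frac_le mult_left_mono) (simp_all add: mult_left_mono)
  also have "\<dots> \<le> laplace_integral \<alpha> T2"
    using lower by (simp add: T2_def c_def)
  also have "\<dots> \<le> laplace_integral \<alpha> t"
    using laplace_integral_antimono[OF assms(1) le \<open>0 \<le> t\<close> T(2) int_t] by simp
  finally show ?thesis
    using int_t up by (simp add: c_def)
qed

lemma unif_conv_laplace_integral_bounds_at_top:
  assumes [measurable]: "\<alpha> \<in> borel_measurable borel"
    and dens: "\<And>n. is_prob_density (g n)" and uc: "unif_conv g \<alpha>" and "0 < \<epsilon>"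
  shows "\<forall>\<^sub>F t in at_top. integrable lborel (\<lambda>u. exp (t * (\<alpha> u - u\<^sup>2)))
    \<and> sqrt (2 * pi) * exp (- (\<epsilon> * (t + 1))) / sqrt (2 * (t + 1)) \<le> laplace_integral \<alpha> t
    \<and> laplace_integral \<alpha> t \<le> sqrt (2 * pi) * exp (\<epsilon> * t)"
proof -
  have le: "AE u in lborel. \<alpha> u \<le> u\<^sup>2"
    using unif_conv_AE_le_square[OF assms(1-3)] .
  define B where "B n \<longleftrightarrow> 3 \<le> n \<and> integrable lborel (\<lambda>u. exp (ln (real n) * (\<alpha> u - u\<^sup>2)))
      \<and> laplace_integral \<alpha> (ln (real n)) \<le> sqrt (2 * pi) * exp (\<epsilon> * ln (real n)) / sqrt (2 * ln (real n))
      \<and> sqrt (2 * pi) * exp (- (\<epsilon> * ln (real (Suc n)))) / sqrt (2 * ln (real (Suc n)))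
        \<le> laplace_integral \<alpha> (ln (real (Suc n)))" for n
  note bounds = unif_conv_laplace_integral_bounds[OF assms]
  have "eventually B sequentially"
    using eventually_ge_at_top[of 3] bounds bounds[THEN eventually_sequentially_Suc[THEN iffD2]]
    by eventually_elim (simp add: B_def)
  moreover have "filterlim (\<lambda>t::real. \<lfloor>exp t\<rfloor>) at_top at_top"
    by (rule filterlim_compose[OF filterlim_floor_sequentially exp_at_top])
  then have "filterlim (\<lambda>t::real. nat \<lfloor>exp t\<rfloor>) sequentially at_top"
    by (rule filterlim_compose[OF filterlim_nat_sequentially])
  ultimately have "\<forall>\<^sub>F t::real in at_top. B (nat \<lfloor>exp t\<rfloor>)"
    by (rule eventually_compose_filterlim)
  with eventually_ge_at_top[of 0] show ?thesis
  proof eventually_elim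
    case (elim t)
    from elim(2) show ?case
      unfolding B_def using \<open>0 < \<epsilon>\<close>
      by (intro laplace_integral_bounds_interpolate[OF assms(1) le elim(1)]) auto
  qed
qed

lemma int_limit_if_unif_conv:
  assumes [measurable]: "\<alpha> \<in> borel_measurable borel"
    and dens: "\<And>n. is_prob_density (g n)" and uc: "unif_conv g \<alpha>"
  shows "int_limit \<alpha>"
  unfolding int_limit_def laplace_integral_def[symmetric]
proof
  show "\<forall>\<^sub>F t in at_top. integrable lborel (\<lambda>u. exp (t * (\<alpha> u - u\<^sup>2)))"
    using unif_conv_laplace_integral_bounds_at_top[OF assms zero_less_one] by (auto elim: eventually_mono)
  show "((\<lambda>t. ln (laplace_integral \<alpha> t) / t) \<longlongrightarrow> 0) at_top"
  proof (rule tendstoI)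
    fix e :: real assume "0 < e"
    define c where "c = sqrt (2 * pi)"
    have c: "0 < c"
      by (simp add: c_def)
    have "((\<lambda>t. (ln c - e / 2 * (t + 1) - ln (sqrt (2 * (t + 1)))) / t) \<longlongrightarrow> - (e / 2)) at_top"
      by real_asymp
    then have lo: "\<forall>\<^sub>F t in at_top. - e < (ln c - e / 2 * (t + 1) - ln (sqrt (2 * (t + 1)))) / t"
      by (rule order_tendstoD(1)) (use \<open>0 < e\<close> in simp)
    have "((\<lambda>t. (ln c + e / 2 * t) / t) \<longlongrightarrow> e / 2) at_top"
      by real_asymp
    then have hi: "\<forall>\<^sub>F t in at_top. (ln c + e / 2 * t) / t < e"
      by (rule order_tendstoD(2)) (use \<open>0 < e\<close> in simp)
    from lo hi eventually_gt_at_top[of 0]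
      unif_conv_laplace_integral_bounds_at_top[OF assms half_gt_zero[OF \<open>0 < e\<close>], folded c_def]
    show "\<forall>\<^sub>F t in at_top. dist (ln (laplace_integral \<alpha> t) / t) 0 < e"
    proof eventually_elim
      case (elim t)
      have "0 < c * exp (- (e / 2 * (t + 1))) / sqrt (2 * (t + 1))"
        using c \<open>0 < t\<close> by simp
      with elim have "ln (c * exp (- (e / 2 * (t + 1))) / sqrt (2 * (t + 1))) \<le> ln (laplace_integral \<alpha> t)"
        "ln (laplace_integral \<alpha> t) \<le> ln (c * exp (e / 2 * t))"
        by (auto intro!: ln_mono)
      then have "ln c - e / 2 * (t + 1) - ln (sqrt (2 * (t + 1))) \<le> ln (laplace_integral \<alpha> t)"
        "ln (laplace_integral \<alpha> t) \<le> ln c + e / 2 * t"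
        using elim c by (simp_all add: ln_div ln_mult)
      then have "(ln c - e / 2 * (t + 1) - ln (sqrt (2 * (t + 1)))) / t \<le> ln (laplace_integral \<alpha> t) / t"
        "ln (laplace_integral \<alpha> t) / t \<le> (ln c + e / 2 * t) / t"
        using \<open>0 < t\<close> by (simp_all add: divide_right_mono)
      with elim have "- e < ln (laplace_integral \<alpha> t) / t" "ln (laplace_integral \<alpha> t) / t < e"
        by linarith+
      then show ?case
        by (simp add: dist_real_def abs_less_iff)
    qed
  qed
qed

section \<open>Sufficiency: tilted densities\<close>

definition tilted_density :: "(real \<Rightarrow> real) \<Rightarrow> real \<Rightarrow> real \<Rightarrow> real" where
  "tilted_density \<alpha> T x =
     exp (T * (\<alpha> (x / sqrt (2 * T)) - (x / sqrt (2 * T))\<^sup>2)) / (sqrt (2 * T) * laplace_integral \<alpha> T)"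

lemma laplace_integral_pos:
  assumes "integrable lborel (\<lambda>u. exp (T * (\<alpha> u - u\<^sup>2)))"
  shows "0 < laplace_integral \<alpha> T"
  unfolding laplace_integral_def using assms by (intro integral_exp_pos) auto

lemma tilted_density_rescaled:
  assumes "0 < T"
  shows "tilted_density \<alpha> T (u * sqrt (2 * T))
    = exp (T * (\<alpha> u - u\<^sup>2)) / (sqrt (2 * T) * laplace_integral \<alpha> T)"
  using assms by (simp add: tilted_density_def)

lemma is_prob_densityI_integral:
  assumes "g \<in> borel_measurable borel" "\<And>x. 0 \<le> g x"
    and "integrable lborel g" "(\<integral>x. g x \<partial>lborel) = 1"
  shows "is_prob_density g"
  using assms nn_integral_eq_integral[of lborel g] by (simp add: is_prob_density_def)

lemma is_prob_density_tilted_density: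
  assumes [measurable]: "\<alpha> \<in> borel_measurable borel" and T: "0 < T"
    and int: "integrable lborel (\<lambda>u. exp (T * (\<alpha> u - u\<^sup>2)))"
  shows "is_prob_density (tilted_density \<alpha> T)"
proof (rule is_prob_densityI_integral)
  define S where "S = sqrt (2 * T)"
  have S: "0 < S" and F: "0 < laplace_integral \<alpha> T"
    using T laplace_integral_pos[OF int] by (simp_all add: S_def)
  have rescaled: "tilted_density \<alpha> T (S * u) = exp (T * (\<alpha> u - u\<^sup>2)) / (S * laplace_integral \<alpha> T)" for u
    using tilted_density_rescaled[OF T, of \<alpha> u] by (simp add: S_def mult.commute)
  show "tilted_density \<alpha> T \<in> borel_measurable borel"
    unfolding tilted_density_def by measurable
  show "0 \<le> tilted_density \<alpha> T x" for x
    using S F by (simp add: tilted_density_def S_def)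
  have "integrable lborel (\<lambda>u. tilted_density \<alpha> T (S * u))"
    unfolding rescaled using int by simp
  then show "integrable lborel (tilted_density \<alpha> T)"
    using lborel_integrable_real_affine_iff[of S "tilted_density \<alpha> T" 0] S by simp
  have "(\<integral>x. tilted_density \<alpha> T x \<partial>lborel) = S * (\<integral>u. exp (T * (\<alpha> u - u\<^sup>2)) / (S * laplace_integral \<alpha> T) \<partial>lborel)"
    using lborel_integral_real_affine[of S "tilted_density \<alpha> T" 0] S by (simp add: rescaled)
  also have "\<dots> = 1"
    using S F by (simp add: laplace_integral_def)
  finally show "(\<integral>x. tilted_density \<alpha> T x \<partial>lborel) = 1" .
qed

lemma llr_tilted_density:
  assumes T: "0 < T" and int: "integrable lborel (\<lambda>u. exp (T * (\<alpha> u - u\<^sup>2)))"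
  shows "0 < tilted_density \<alpha> T (u * sqrt (2 * T))"
    and "llr (tilted_density \<alpha> T) (u * sqrt (2 * T))
      = T * \<alpha> u + ln (sqrt (2 * pi) / (sqrt (2 * T) * laplace_integral \<alpha> T))"
proof -
  define C where "C = sqrt (2 * pi) / (sqrt (2 * T) * laplace_integral \<alpha> T)"
  have C: "0 < C"
    using T laplace_integral_pos[OF int] by (simp add: C_def)
  show "0 < tilted_density \<alpha> T (u * sqrt (2 * T))"
    using T laplace_integral_pos[OF int] by (simp add: tilted_density_rescaled)
  have "tilted_density \<alpha> T (u * sqrt (2 * T)) / std_normal_density (u * sqrt (2 * T))
      = exp (T * (\<alpha> u - u\<^sup>2)) / (sqrt (2 * T) * laplace_integral \<alpha> T) / (exp (- (T * u\<^sup>2)) / sqrt (2 * pi))"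
    using T by (simp only: tilted_density_rescaled std_normal_density_sqrt_scale less_imp_le)
  also have "\<dots> = C * exp (T * \<alpha> u)"
    by (simp add: C_def right_diff_distrib exp_diff exp_minus field_simps)
  finally have "tilted_density \<alpha> T (u * sqrt (2 * T)) / std_normal_density (u * sqrt (2 * T)) = C * exp (T * \<alpha> u)" .
  then show "llr (tilted_density \<alpha> T) (u * sqrt (2 * T)) = T * \<alpha> u + ln C"
    using C by (simp add: llr_def ln_mult)
qed

lemma int_limit_along_log:
  assumes "int_limit \<alpha>"
  shows "\<forall>\<^sub>F n in sequentially. 0 < ln (real n) \<and> integrable lborel (\<lambda>u. exp (ln (real n) * (\<alpha> u - u\<^sup>2)))"
    and "(\<lambda>n. ln (sqrt (2 * pi) / (sqrt (2 * ln (real n)) * laplace_integral \<alpha> (ln (real n)))) / ln (real n))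
      \<longlonglongrightarrow> 0"
proof -
  define T where "T n = ln (real n)" for n :: nat
  have T_lim: "filterlim T at_top sequentially"
    unfolding T_def by (rule filterlim_compose[OF ln_at_top filterlim_real_sequentially])
  have "\<forall>\<^sub>F t in at_top. integrable lborel (\<lambda>u. exp (t * (\<alpha> u - u\<^sup>2)))"
    using assms unfolding int_limit_def by blast
  from eventually_compose_filterlim[OF this T_lim]
  have "\<forall>\<^sub>F n in sequentially. integrable lborel (\<lambda>u. exp (T n * (\<alpha> u - u\<^sup>2)))" .
  moreover have "\<forall>\<^sub>F n in sequentially. 0 < T n"
    using T_lim by (simp add: filterlim_at_top_dense)
  ultimately show admissible: "\<forall>\<^sub>F n in sequentially. 0 < T n \<and> integrable lborel (\<lambda>u. exp (T n * (\<alpha> u - u\<^sup>2)))"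
    by eventually_elim simp
  have "((\<lambda>t. ln (laplace_integral \<alpha> t) / t) \<longlongrightarrow> 0) at_top"
    using assms unfolding int_limit_def laplace_integral_def by blast
  then have "(\<lambda>n. ln (laplace_integral \<alpha> (T n)) / T n) \<longlonglongrightarrow> 0"
    using filterlim_compose[OF _ T_lim] by auto
  moreover have "(\<lambda>n. (ln (sqrt (2 * pi)) - ln (sqrt (2 * T n))) / T n) \<longlonglongrightarrow> 0"
    unfolding T_def by real_asymp
  ultimately have "(\<lambda>n. (ln (sqrt (2 * pi)) - ln (sqrt (2 * T n))) / T n - ln (laplace_integral \<alpha> (T n)) / T n)
      \<longlonglongrightarrow> 0"
    using tendsto_diff by fastforce
  moreover have "\<forall>\<^sub>F n in sequentially.
      (ln (sqrt (2 * pi)) - ln (sqrt (2 * T n))) / T n - ln (laplace_integral \<alpha> (T n)) / T n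
      = ln (sqrt (2 * pi) / (sqrt (2 * T n) * laplace_integral \<alpha> (T n))) / T n"
    using admissible
  proof eventually_elim
    case (elim n)
    then have "0 < laplace_integral \<alpha> (T n)"
      using laplace_integral_pos[of "T n" \<alpha>] by simp
    with elim show ?case
      by (simp add: ln_div ln_mult field_simps)
  qed
  ultimately show "(\<lambda>n. ln (sqrt (2 * pi) / (sqrt (2 * ln (real n)) * laplace_integral \<alpha> (ln (real n)))) / ln (real n))
      \<longlonglongrightarrow> 0"
    unfolding T_def by (rule Lim_transform_eventually)
qed

lemma unif_conv_tilted_densities:
  assumes [measurable]: "\<alpha> \<in> borel_measurable borel" and lim: "int_limit \<alpha>"
  shows "\<exists>g. (\<forall>n. is_prob_density (g n)) \<and> unif_conv g \<alpha>"
proof -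
  define admissible where "admissible n \<longleftrightarrow>
    0 < ln (real n) \<and> integrable lborel (\<lambda>u. exp (ln (real n) * (\<alpha> u - u\<^sup>2)))" for n
  define g where
    "g n = (if admissible n then tilted_density \<alpha> (ln (real n)) else std_normal_density)" for n
  have dens: "is_prob_density (g n)" for n
    by (simp add: g_def admissible_def is_prob_density_std_normal is_prob_density_tilted_density)
  have "unif_conv g \<alpha>"
    unfolding unif_conv_def
  proof (intro allI impI)
    fix \<epsilon> :: real assume "0 < \<epsilon>"
    with int_limit_along_log(2)[OF lim]
    have "\<forall>\<^sub>F n in sequentially.
      \<bar>ln (sqrt (2 * pi) / (sqrt (2 * ln (real n)) * laplace_integral \<alpha> (ln (real n)))) / ln (real n)\<bar> < \<epsilon>"
      by (auto simp: tendsto_iff dist_real_def)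
    with int_limit_along_log(1)[OF lim]
    show "\<forall>\<^sub>F n in sequentially. \<forall>u. 0 < g n (u * sqrt (2 * ln (real n)))
      \<and> \<bar>llr (g n) (u * sqrt (2 * ln (real n))) / ln (real n) - \<alpha> u\<bar> < \<epsilon>"
    proof eventually_elim
      case (elim n)
      then have T: "0 < ln (real n)" and int: "integrable lborel (\<lambda>u. exp (ln (real n) * (\<alpha> u - u\<^sup>2)))"
        by simp_all
      show ?case
        using elim llr_tilted_density[OF T int]
        by (simp add: g_def admissible_def add_divide_distrib)
    qed
  qed
  with dens show ?thesis
    by blast
qed

section \<open>Convexity in the convolutional model\<close>

lemma convex_on_ln_integral_exp_affine:
  fixes h :: "real \<Rightarrow> real"
  assumes "prob_space P" and int: "\<And>x. integrable P (\<lambda>y. exp (x * y + h y))"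
  shows "convex_on UNIV (\<lambda>x. ln (\<integral>y. exp (x * y + h y) \<partial>P))"
proof (rule convex_onI)
  fix l x1 x2 :: real assume l: "0 < l" "l < 1"
  define Z where "Z x = (\<integral>y. exp (x * y + h y) \<partial>P)" for x
  have Z_pos: "0 < Z x" for x
    unfolding Z_def using int prob_space.emeasure_space_1[OF \<open>prob_space P\<close>]
    by (intro integral_exp_pos) auto
  define K where "K = (1 - l) * ln (Z x1) + l * ln (Z x2)"
  \<comment> \<open>Convexity of exp bounds the normalised integrand at the mixed point by the mixture of
    the normalised integrands; integrating gives Hoelder's inequality.\<close>
  have pointwise: "exp (((1 - l) * x1 + l * x2) * y + h y) / exp K
      \<le> (1 - l) * (exp (x1 * y + h y) / Z x1) + l * (exp (x2 * y + h y) / Z x2)" for y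
  proof -
    have "exp (((1 - l) * x1 + l * x2) * y + h y) / exp K
        = exp ((1 - l) * (x1 * y + h y - ln (Z x1)) + l * (x2 * y + h y - ln (Z x2)))"
      by (simp add: K_def algebra_simps flip: exp_diff)
    also have "\<dots> \<le> (1 - l) * exp (x1 * y + h y - ln (Z x1)) + l * exp (x2 * y + h y - ln (Z x2))"
      using convex_onD[OF exp_convex, of l] l by simp
    also have "\<dots> = (1 - l) * (exp (x1 * y + h y) / Z x1) + l * (exp (x2 * y + h y) / Z x2)"
      using Z_pos by (simp add: exp_diff)
    finally show ?thesis .
  qed
  have "Z ((1 - l) * x1 + l * x2) / exp K
      = (\<integral>y. exp (((1 - l) * x1 + l * x2) * y + h y) / exp K \<partial>P)"
    unfolding Z_def by simp
  also have "\<dots> \<le> (\<integral>y. (1 - l) * (exp (x1 * y + h y) / Z x1) + l * (exp (x2 * y + h y) / Z x2) \<partial>P)"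
    by (rule integral_mono) (use pointwise int in auto)
  also have "\<dots> = (1 - l) * (Z x1 / Z x1) + l * (Z x2 / Z x2)"
    using int by (simp add: Z_def)
  also have "\<dots> = 1"
    using Z_pos[of x1] Z_pos[of x2] by simp
  finally have "Z ((1 - l) * x1 + l * x2) \<le> exp K"
    by simp
  then have "ln (Z ((1 - l) * x1 + l * x2)) \<le> K"
    using Z_pos by (metis ln_exp ln_le_cancel_iff exp_gt_zero)
  then show "ln (Z ((1 - l) *\<^sub>R x1 + l *\<^sub>R x2)) \<le> (1 - l) * ln (Z x1) + l * ln (Z x2)"
    by (simp add: K_def)
qed simp

lemma convex_on_llr_gaussian_mixture:
  assumes P: "prob_space P" "sets P = sets borel"
    and g: "\<And>x. g x = (\<integral>y. std_normal_density (x - y) \<partial>P)"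
  shows "convex_on UNIV (llr g)"
proof -
  interpret P: prob_space P by (rule P(1))
  have int: "integrable P (\<lambda>y. exp (x * y + - (y\<^sup>2 / 2)))" for x
  proof (rule P.integrable_const_bound[where B = "exp (x\<^sup>2 / 2)"])
    have "x * y - y\<^sup>2 / 2 \<le> x\<^sup>2 / 2" for y
      using sum_squares_ge_zero[of "x - y" 0] by (simp add: power2_eq_square algebra_simps)
    then show "AE y in P. norm (exp (x * y + - (y\<^sup>2 / 2))) \<le> exp (x\<^sup>2 / 2)"
      by simp
    show "(\<lambda>y. exp (x * y + - (y\<^sup>2 / 2))) \<in> borel_measurable P"
      by (subst measurable_cong_sets[OF P(2) refl]) simp
  qed
  have "llr g x = ln (\<integral>y. std_normal_density (x - y) / std_normal_density x \<partial>P)" for x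
    by (simp add: llr_def g)
  also have "\<dots> x = ln (\<integral>y. exp (x * y + - (y\<^sup>2 / 2)) \<partial>P)" for x
    by (simp add: std_normal_density_shift_ratio)
  finally have "llr g = (\<lambda>x. ln (\<integral>y. exp (x * y + - (y\<^sup>2 / 2)) \<partial>P))"
    by (rule ext)
  then show ?thesis
    using convex_on_ln_integral_exp_affine[OF P(1) int] by simp
qed

lemma convex_on_tendsto:
  fixes f :: "'b \<Rightarrow> 'a::real_vector \<Rightarrow> real"
  assumes "F \<noteq> bot" and conv: "\<forall>\<^sub>F n in F. convex_on S (f n)"
    and lim: "\<And>x. x \<in> S \<Longrightarrow> ((\<lambda>n. f n x) \<longlongrightarrow> h x) F"
  shows "convex_on S h"
proof (rule convex_onI)
  show "convex S"
    using eventually_happens'[OF assms(1,2)] convex_on_imp_convex by blast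
  fix t :: real and x y assume t: "0 < t" "t < 1" and xy: "x \<in> S" "y \<in> S"
  then have "(1 - t) *\<^sub>R x + t *\<^sub>R y \<in> S"
    using \<open>convex S\<close> by (simp add: convex_alt)
  moreover have "((\<lambda>n. (1 - t) * f n x + t * f n y) \<longlongrightarrow> (1 - t) * h x + t * h y) F"
    using xy by (intro tendsto_intros lim)
  moreover have "\<forall>\<^sub>F n in F. f n ((1 - t) *\<^sub>R x + t *\<^sub>R y) \<le> (1 - t) * f n x + t * f n y"
    using conv by eventually_elim (use t xy in \<open>auto intro: convex_onD\<close>)
  ultimately show "h ((1 - t) *\<^sub>R x + t *\<^sub>R y) \<le> (1 - t) * h x + t * h y"
    using tendsto_le[OF assms(1)] lim by blast
qed

lemma convex_on_rescale:
  fixes f :: "real \<Rightarrow> real"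
  assumes "convex_on UNIV f" "0 \<le> c"
  shows "convex_on UNIV (\<lambda>x. f (x * s) / c)"
proof -
  have "convex_on UNIV (\<lambda>x. f (x * s))"
  proof (rule convex_onI)
    fix t x y :: real assume "0 < t" "t < 1"
    then show "f (((1 - t) *\<^sub>R x + t *\<^sub>R y) * s) \<le> (1 - t) * f (x * s) + t * f (y * s)"
      using convex_onD[OF assms(1), of t "x * s" "y * s"] by (simp add: algebra_simps)
  qed simp
  then show ?thesis
    using assms(2) by auto
qed

lemma unif_conv_tendsto:
  assumes "unif_conv g \<alpha>"
  shows "((\<lambda>n. llr (g n) (u * sqrt (2 * ln (real n))) / ln (real n)) \<longlongrightarrow> \<alpha> u) sequentially"
proof (rule tendstoI)
  fix e :: real assume "0 < e"
  with assms show "\<forall>\<^sub>F n in sequentially. dist (llr (g n) (u * sqrt (2 * ln (real n))) / ln (real n)) (\<alpha> u) < e"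
    unfolding unif_conv_def dist_real_def by (fastforce elim: eventually_mono)
qed

lemma convex_on_if_unif_conv_gaussian_mixture:
  assumes P: "\<And>n. prob_space (P n)" "\<And>n. sets (P n) = sets borel"
    and g: "\<And>n x. g n x = (\<integral>y. std_normal_density (x - y) \<partial>P n)"
    and "unif_conv g \<alpha>"
  shows "convex_on UNIV \<alpha>"
proof (rule convex_on_tendsto[OF sequentially_bot])
  show "\<forall>\<^sub>F n in sequentially. convex_on UNIV (\<lambda>u. llr (g n) (u * sqrt (2 * ln (real n))) / ln (real n))"
    using eventually_ge_at_top[of 1]
    by eventually_elim (auto intro: convex_on_rescale convex_on_llr_gaussian_mixture[OF P g])
qed (use unif_conv_tendsto[OF assms(4)] in auto)

theorem lemma2:
  fixes \<alpha> :: "real \<Rightarrow> real"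
  assumes meas: "\<alpha> \<in> borel_measurable borel"
  shows "(\<forall>g :: nat \<Rightarrow> real \<Rightarrow> real. (\<forall>n. is_prob_density (g n)) \<and> unif_conv g \<alpha> \<longrightarrow>
            int_limit \<alpha> \<and> (AE u in lborel. \<alpha> u \<le> u\<^sup>2))
       \<and> (int_limit \<alpha> \<longrightarrow>
            (\<exists>g :: nat \<Rightarrow> real \<Rightarrow> real. (\<forall>n. is_prob_density (g n)) \<and> unif_conv g \<alpha>))
       \<and> (\<forall>(g :: nat \<Rightarrow> real \<Rightarrow> real) (P :: nat \<Rightarrow> real measure).
            (\<forall>n. prob_space (P n) \<and> sets (P n) = sets borel) \<and>
            (\<forall>n x. g n x = (\<integral>y. std_normal_density (x - y) \<partial>P n)) \<and>
            unif_conv g \<alpha> \<longrightarrow> convex_on UNIV \<alpha>)"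
proof (intro conjI allI impI)
  fix g :: "nat \<Rightarrow> real \<Rightarrow> real"
  assume "(\<forall>n. is_prob_density (g n)) \<and> unif_conv g \<alpha>"
  then have dens: "\<And>n. is_prob_density (g n)" and uc: "unif_conv g \<alpha>"
    by auto
  show "int_limit \<alpha>"
    by (rule int_limit_if_unif_conv[OF meas dens uc])
  show "AE u in lborel. \<alpha> u \<le> u\<^sup>2"
    by (rule unif_conv_AE_le_square[OF meas dens uc])
next
  assume "int_limit \<alpha>"
  then show "\<exists>g. (\<forall>n. is_prob_density (g n)) \<and> unif_conv g \<alpha>"
    by (rule unif_conv_tilted_densities[OF meas])
next
  fix g :: "nat \<Rightarrow> real \<Rightarrow> real" and P
  assume "(\<forall>n. prob_space (P n) \<and> sets (P n) = sets borel)
    \<and> (\<forall>n x. g n x = (\<integral>y. std_normal_density (x - y) \<partial>P n)) \<and> unif_conv g \<alpha>"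
  then show "convex_on UNIV \<alpha>"
    by (intro convex_on_if_unif_conv_gaussian_mixture[of P g \<alpha>]) auto
qed

end
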